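(* Fix $p\in[0,1]$ and let $\alpha'>\alpha[p]$ be real. Then there exist constants $C$ and $\gamma>0$, depending on $p$, $\alpha[p]$ and $\alpha'$, such that $$\mathbb{P}_p(\overline{u}_n>\alpha' n)\le Ce^{-\gamma n}\quad\text{for all }n.$$
   Context: Let $\mathcal{L}=\{(n,m)\in\mathbb{Z}^2:n\ge0,\ n+m\text{ even}\}$. Under $\mathbb{P}_p$, each site of $\mathcal{L}$ is independently open with probability $p$ and closed otherwise. For $z,z'\in\mathcal{L}$ write $z\to z'$ if there exist $k\ge0$ and sites $z=z_0,\dots,z_k=z'$ of $\mathcal{L}$ such that $z_0,\dots,z_{k-1}$ are open and $z_{i+1}-z_i\in\{(1,1),(2,0),(1,-1)\}$ for every $i$. Use the convention $\sup\emptyset=-\infty$. Set $\overline{u}_0=0$. For $n\ge1$, let $$\overline{u}_n=\sup\{x:\exists y\le0\text{ such that }(0,y)\to(n,x)\text{ or }(1,y)\to(n,x)\},$$ where only sites of $\mathcal{L}$ are considered. Define $\alpha[p]=\inf_{n\ge1}\mathbb{E}_p[\overline{u}_n]/n\in[-\infty,1]$. *)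

theory Defs
  imports "HOL-Probability.Probability"
begin

type_synonym site = "int \<times> int"

definition lattice :: "site set" where
  "lattice = {(n, m). n \<ge> 0 \<and> even (n + m)}"

definition steps :: "site set" where
  "steps = {(1, 1), (2, 0), (1, -1)}"

text \<open>Configurations: \<open>\<omega> z\<close> means site z is open.\<close>
definition perc :: "real \<Rightarrow> (site \<Rightarrow> bool) measure" where
  "perc p = PiM lattice (\<lambda>_. measure_pmf (bernoulli_pmf p))"

inductive reach :: "(site \<Rightarrow> bool) \<Rightarrow> site \<Rightarrow> site \<Rightarrow> bool" for \<omega> where
  refl: "z \<in> lattice \<Longrightarrow> reach \<omega> z z"
| step: "z \<in> lattice \<Longrightarrow> \<omega> z \<Longrightarrow> z' - z \<in> steps \<Longrightarrow> z' \<in> lattice \<Longrightarrow> reach \<omega> z' z''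
          \<Longrightarrow> reach \<omega> z z''"

definition ubar :: "nat \<Rightarrow> (site \<Rightarrow> bool) \<Rightarrow> ereal" where
  "ubar n \<omega> = (if n = 0 then 0 else
     Sup {ereal (real_of_int x) | x. \<exists>y\<le>0.
            reach \<omega> (0, y) (int n, x) \<or> reach \<omega> (1, y) (int n, x)})"

definition expect_ereal :: "'a measure \<Rightarrow> ('a \<Rightarrow> ereal) \<Rightarrow> ereal" where
  "expect_ereal M X =
     enn2ereal (\<integral>\<^sup>+ \<omega>. e2ennreal (X \<omega>) \<partial>M) - enn2ereal (\<integral>\<^sup>+ \<omega>. e2ennreal (- X \<omega>) \<partial>M)"

definition alpha :: "real \<Rightarrow> ereal" where
  "alpha p = (INF n\<in>{1::nat..}. expect_ereal (perc p) (ubar n) / ereal (real n))"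

end

theory Submission
  imports Defs
begin

text \<open>Let \<open>(n, a)\<close> be the rightmost point of column \<open>n\<close> reached from the axis. A path to column
  \<open>n + m\<close> crosses column \<open>n\<close> at or below height \<open>a\<close>, so seen from \<open>(n, a)\<close> its remainder starts on
  the translated axis: \<open>ubar (n + m) \<le> a + ubar' m\<close>, where \<open>ubar' m\<close> only depends on the sites to
  the right of column \<open>n\<close> and, given \<open>a\<close>, is distributed as \<open>ubar m\<close> independently of the sites to
  the left. Hence \<open>\<phi>(n) = E exp (\<lambda> ubar n)\<close> is submultiplicative. Pick \<open>k\<close> with
  \<open>E ubar k < c < \<alpha>' k\<close>; as \<open>ubar k \<le> k\<close>, truncating \<open>ubar k\<close> from below and Hoeffding's lemma give
  \<open>\<lambda> > 0\<close> with \<open>\<phi>(k) \<le> exp (\<lambda> c)\<close>. Then \<open>\<phi>(n) \<le> C exp (\<lambda> c n / k)\<close>, and the Chernoff bound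
  \<open>P (ubar n > \<alpha>' n) \<le> \<phi>(n) exp (- \<lambda> \<alpha>' n)\<close> decays exponentially.\<close>

section \<open>Exponential moments and product measures\<close>

lemma indep_vars_PiM_components:
  assumes M: "\<And>i. i \<in> I \<Longrightarrow> prob_space (M i)"
  shows "prob_space.indep_vars (PiM I M) M (\<lambda>i \<omega>. \<omega> i) I"
proof -
  interpret prob_space "PiM I M" using M by (rule prob_space_PiM)
  show ?thesis
  proof (cases "I = {}")
    case True
    show ?thesis unfolding indep_vars_def indep_sets_def using True by simp
  next
    case False
    have "distr (PiM I M) (PiM I M) (\<lambda>\<omega>. \<lambda>i\<in>I. \<omega> i) = distr (PiM I M) (PiM I M) (\<lambda>\<omega>. \<omega>)"
      by (rule distr_cong) (auto simp: space_PiM PiE_def extensional_def restrict_def fun_eq_iff)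
    also have "\<dots> = PiM I (\<lambda>i. distr (PiM I M) (M i) (\<lambda>\<omega>. \<omega> i))"
      using M by (auto intro!: PiM_cong simp: distr_PiM_component)
    finally show ?thesis using False
      by (subst indep_vars_iff_distr_eq_PiM') (auto intro: measurable_component_singleton)
  qed
qed

lemma distr_restrict_pair_PiM:
  assumes M: "\<And>i. i \<in> I \<Longrightarrow> prob_space (M i)" and JK: "J \<inter> K = {}" "J \<subseteq> I" "K \<subseteq> I"
  shows "distr (PiM I M) (PiM J M \<Otimes>\<^sub>M PiM K M) (\<lambda>\<omega>. (restrict \<omega> J, restrict \<omega> K)) =
    PiM J M \<Otimes>\<^sub>M PiM K M"
proof -
  interpret prob_space "PiM I M" using M by (rule prob_space_PiM)
  have marginal: "distr (PiM I M) (PiM L M) (\<lambda>\<omega>. restrict \<omega> L) = PiM L M" if "L \<subseteq> I" for L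
    using distr_PiM_reindex[of I M "\<lambda>i. i" L] M that by auto
  have "indep_var (PiM J M) (\<lambda>\<omega>. restrict \<omega> J) (PiM K M) (\<lambda>\<omega>. restrict \<omega> K)"
    using indep_var_restrict[OF indep_vars_PiM_components[OF M] JK] by simp
  then show ?thesis using JK by (simp add: indep_var_distribution_eq marginal)
qed

lemma SUP_min_of_nat: "(SUP T::nat. min a (of_nat T)) = (a :: ennreal)"
proof (cases "a = top")
  case True
  then show ?thesis by (simp add: ennreal_SUP_of_nat_eq_top)
next
  case False
  then obtain r where r: "a = ennreal r" "0 \<le> r" by (cases a) auto
  obtain T :: nat where "r \<le> real T" using real_arch_simple by blast
  then have "a \<le> of_nat T" using r by (simp add: ennreal_of_nat_eq_real_of_nat)
  then show ?thesis by (intro antisym SUP_least SUP_upper2[of T]) auto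
qed

lemma nn_integral_min_of_nat_SUP:
  assumes [measurable]: "f \<in> borel_measurable M"
  shows "(SUP T::nat. \<integral>\<^sup>+ x. min (f x) (of_nat T) \<partial>M) = (\<integral>\<^sup>+ x. f x \<partial>M)"
proof -
  have "incseq (\<lambda>T x. min (f x) (of_nat T :: ennreal))"
    unfolding incseq_def le_fun_def by (intro allI impI min.mono order.refl) (simp add: of_nat_mono)
  then have "(SUP T::nat. \<integral>\<^sup>+ x. min (f x) (of_nat T) \<partial>M) = (\<integral>\<^sup>+ x. (SUP T::nat. min (f x) (of_nat T)) \<partial>M)"
    by (intro nn_integral_monotone_convergence_SUP[symmetric]) simp_all
  then show ?thesis by (simp add: SUP_min_of_nat)
qed

lemma (in prob_space) expectation_max_ereal:
  fixes X :: "'a \<Rightarrow> ereal"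
  assumes [measurable]: "X \<in> borel_measurable M" and bound: "\<And>\<omega>. X \<omega> \<le> ereal b"
  shows "expectation (\<lambda>\<omega>. real_of_ereal (max (X \<omega>) (ereal (- real T)))) =
    enn2real (\<integral>\<^sup>+ \<omega>. e2ennreal (X \<omega>) \<partial>M) - enn2real (\<integral>\<^sup>+ \<omega>. min (e2ennreal (- X \<omega>)) (of_nat T) \<partial>M)"
proof -
  define Y where "Y \<omega> = real_of_ereal (max (X \<omega>) (ereal (- real T)))" for \<omega>
  have Y_cases: "X \<omega> = -\<infinity> \<and> Y \<omega> = - real T \<or> (\<exists>r. X \<omega> = ereal r \<and> r \<le> b \<and> Y \<omega> = max r (- real T))"
    for \<omega> using bound[of \<omega>] unfolding Y_def by (cases "X \<omega>") (auto simp: max_def)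
  have "integrable M Y"
  proof (rule integrable_const_bound)
    have "norm (Y \<omega>) \<le> \<bar>b\<bar> + real T" for \<omega> using Y_cases[of \<omega>] by (auto simp: max_def)
    then show "AE \<omega> in M. norm (Y \<omega>) \<le> \<bar>b\<bar> + real T" by simp
  qed (unfold Y_def[abs_def], measurable)
  moreover have "ennreal (Y \<omega>) = e2ennreal (X \<omega>)" for \<omega>
    using Y_cases[of \<omega>] by (auto simp: ennreal_neg e2ennreal_neg max_def)
  moreover have "ennreal (- Y \<omega>) = min (e2ennreal (- X \<omega>)) (of_nat T)" for \<omega>
    using Y_cases[of \<omega>]
    by (auto simp: ennreal_neg max_def min_def ennreal_of_nat_eq_real_of_nat ennreal_le_iff top_unique)
  ultimately show ?thesis unfolding Y_def[symmetric] by (simp add: real_lebesgue_integral_def)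
qed

lemma (in prob_space) expect_ereal_truncation_less:
  fixes X :: "'a \<Rightarrow> ereal"
  assumes [measurable]: "X \<in> borel_measurable M" and bound: "\<And>\<omega>. X \<omega> \<le> ereal b"
    and less: "expect_ereal M X < ereal c"
  shows "\<exists>T::nat. expectation (\<lambda>\<omega>. real_of_ereal (max (X \<omega>) (ereal (- real T)))) < c"
proof -
  define P where "P = (\<integral>\<^sup>+ \<omega>. e2ennreal (X \<omega>) \<partial>M)"
  define N where "N = (\<integral>\<^sup>+ \<omega>. e2ennreal (- X \<omega>) \<partial>M)"
  define N_trunc where "N_trunc T = (\<integral>\<^sup>+ \<omega>. min (e2ennreal (- X \<omega>)) (of_nat T) \<partial>M)" for T :: nat
  have "P \<le> (\<integral>\<^sup>+ \<omega>. ennreal b \<partial>M)"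
    unfolding P_def using e2ennreal_mono[OF bound] by (intro nn_integral_mono) simp
  then have "P < top" by (simp add: emeasure_space_1 le_less_trans)
  then obtain P' where P': "P = ennreal P'" "0 \<le> P'" by (cases P) auto
  have "ereal P' - enn2ereal N < ereal c"
    using less P' unfolding expect_ereal_def P_def[symmetric] N_def[symmetric] by simp
  have "\<exists>T. P' - enn2real (N_trunc T) < c"
  proof (cases "P' < c")
    case True
    then show ?thesis by (intro exI[of _ 0]) (simp add: N_trunc_def)
  next
    case False
    have "ennreal (P' - c) < N"
    proof (cases N)
      case (real N')
      then show ?thesis using \<open>ereal P' - enn2ereal N < ereal c\<close> False by (simp add: ennreal_lessI)
    qed simp
    also have "N = (SUP T. N_trunc T)"
      unfolding N_def N_trunc_def by (rule nn_integral_min_of_nat_SUP[symmetric]) measurable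
    finally obtain T where T: "ennreal (P' - c) < N_trunc T" by (auto simp: less_SUP_iff)
    have "N_trunc T \<le> (\<integral>\<^sup>+ \<omega>. of_nat T \<partial>M)" unfolding N_trunc_def by (intro nn_integral_mono) simp
    then have "N_trunc T < top" by (simp add: emeasure_space_1 le_less_trans of_nat_less_top)
    then obtain q where "N_trunc T = ennreal q" "0 \<le> q" by (cases "N_trunc T") auto
    then show ?thesis using T False by (intro exI[of _ T]) (simp add: ennreal_less_iff)
  qed
  then show ?thesis
    using P' by (simp add: expectation_max_ereal[OF _ bound] P_def N_trunc_def)
qed

definition exp_ereal :: "real \<Rightarrow> ereal \<Rightarrow> ennreal" where
  "exp_ereal l x = (if x = -\<infinity> then 0 else if x = \<infinity> then \<infinity> else ennreal (exp (l * real_of_ereal x)))"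

lemma exp_ereal_ereal[simp]: "exp_ereal l (ereal r) = ennreal (exp (l * r))"
  by (simp add: exp_ereal_def)

lemma measurable_exp_ereal[measurable]: "exp_ereal l \<in> borel_measurable borel"
  unfolding exp_ereal_def[abs_def] by measurable

lemma exp_ereal_mono: "0 \<le> l \<Longrightarrow> x \<le> y \<Longrightarrow> exp_ereal l x \<le> exp_ereal l y"
  by (cases x; cases y) (auto simp: exp_ereal_def mult_left_mono)

lemma exp_ereal_add: "exp_ereal l (ereal a + y) = exp_ereal l (ereal a) * exp_ereal l y"
proof (cases y)
  case (real r)
  then show ?thesis by (simp add: exp_ereal_def exp_add distrib_left ennreal_mult)
qed (simp_all add: exp_ereal_def ennreal_mult_top)

lemma (in prob_space) exp_ereal_chernoff:
  assumes [measurable]: "X \<in> borel_measurable M" and "0 \<le> l"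
  shows "ennreal (exp (l * t)) * emeasure M {\<omega> \<in> space M. X \<omega> > ereal t}
    \<le> (\<integral>\<^sup>+ \<omega>. exp_ereal l (X \<omega>) \<partial>M)"
proof -
  have "ennreal (exp (l * t)) * emeasure M {\<omega> \<in> space M. X \<omega> > ereal t} =
      (\<integral>\<^sup>+ \<omega>. ennreal (exp (l * t)) * indicator {\<omega> \<in> space M. X \<omega> > ereal t} \<omega> \<partial>M)"
    by (simp add: nn_integral_cmult_indicator)
  also have "\<dots> \<le> (\<integral>\<^sup>+ \<omega>. exp_ereal l (X \<omega>) \<partial>M)"
  proof (rule nn_integral_mono)
    fix \<omega>
    show "ennreal (exp (l * t)) * indicator {\<omega> \<in> space M. X \<omega> > ereal t} \<omega> \<le> exp_ereal l (X \<omega>)"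
      using exp_ereal_mono[OF assms(2), of "ereal t" "X \<omega>"] by (auto split: split_indicator)
  qed
  finally show ?thesis .
qed

lemma (in interval_bounded_random_variable) exp_moment_le_exp:
  assumes "a < b" and "expectation f < c"
  shows "\<exists>l>0. (\<integral>\<^sup>+ x. ennreal (exp (l * f x)) \<partial>M) \<le> ennreal (exp (l * c))"
proof -
  define D where "D = b - a"
  define l where "l = 8 * (c - expectation f) / D\<^sup>2"
  have "0 < l" unfolding l_def D_def using assms by simp
  have "D \<noteq> 0" unfolding D_def using assms(1) by simp
  then have l_sq: "l\<^sup>2 * D\<^sup>2 / 8 = l * (c - expectation f)"
    unfolding l_def by (simp add: power2_eq_square field_simps)
  have "(\<integral>\<^sup>+ x. ennreal (exp (l * f x)) \<partial>M) =
      (\<integral>\<^sup>+ x. ennreal (exp (l * expectation f)) * ennreal (exp (l * (f x - expectation f))) \<partial>M)"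
    by (intro nn_integral_cong) (simp add: ennreal_mult[symmetric] exp_add[symmetric] algebra_simps)
  also have "\<dots> = ennreal (exp (l * expectation f)) * (\<integral>\<^sup>+ x. ennreal (exp (l * (f x - expectation f))) \<partial>M)"
    by (rule nn_integral_cmult) measurable
  also have "\<dots> \<le> ennreal (exp (l * expectation f)) * ennreal (exp (l\<^sup>2 * (b - a)\<^sup>2 / 8))"
    using Hoeffdings_lemma_nn_integral[OF \<open>0 < l\<close>] by (intro mult_left_mono) simp_all
  also have "\<dots> = ennreal (exp (l * c))"
    unfolding D_def[symmetric] l_sq by (simp add: ennreal_mult[symmetric] exp_add[symmetric] algebra_simps)
  finally show ?thesis using \<open>0 < l\<close> by blast
qed

text \<open>Truncating \<open>X\<close> from below at a level where the mean is still below \<open>c\<close> makes it bounded,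
  so Hoeffding's lemma applies; the truncation only increases the exponential moment.\<close>
lemma (in prob_space) exp_ereal_moment_le_exp:
  fixes X :: "'a \<Rightarrow> ereal"
  assumes [measurable]: "X \<in> borel_measurable M" and bound: "\<And>\<omega>. X \<omega> \<le> ereal b"
    and less: "expect_ereal M X < ereal c"
  shows "\<exists>l>0. (\<integral>\<^sup>+ \<omega>. exp_ereal l (X \<omega>) \<partial>M) \<le> ennreal (exp (l * c))"
proof -
  obtain T :: nat where T: "expectation (\<lambda>\<omega>. real_of_ereal (max (X \<omega>) (ereal (- real T)))) < c"
    using expect_ereal_truncation_less[OF _ bound less] by auto
  define Y where "Y \<omega> = real_of_ereal (max (X \<omega>) (ereal (- real T)))" for \<omega>
  have X_le_Y: "X \<omega> \<le> ereal (Y \<omega>)" for \<omega>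
    using bound[of \<omega>] unfolding Y_def by (cases "X \<omega>") (auto simp: max_def)
  have Y_bound: "Y \<omega> \<in> {- real T..\<bar>b\<bar> + 1}" for \<omega>
    using bound[of \<omega>] unfolding Y_def by (cases "X \<omega>") (auto simp: max_def)
  interpret Y: interval_bounded_random_variable M Y "- real T" "\<bar>b\<bar> + 1"
  proof
    show "random_variable borel Y" unfolding Y_def[abs_def] by measurable
  qed (use Y_bound in auto)
  have "- real T < \<bar>b\<bar> + 1" using abs_ge_zero[of b] of_nat_0_le_iff[of T] by linarith
  moreover have "expectation Y < c" using T by (simp add: Y_def[abs_def])
  ultimately obtain l where "0 < l" and l: "(\<integral>\<^sup>+ \<omega>. ennreal (exp (l * Y \<omega>)) \<partial>M) \<le> ennreal (exp (l * c))"
    using Y.exp_moment_le_exp by blast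
  have "(\<integral>\<^sup>+ \<omega>. exp_ereal l (X \<omega>) \<partial>M) \<le> (\<integral>\<^sup>+ \<omega>. ennreal (exp (l * Y \<omega>)) \<partial>M)"
    using exp_ereal_mono[of l, OF _ X_le_Y] \<open>0 < l\<close> by (intro nn_integral_mono) simp
  then show ?thesis using l \<open>0 < l\<close> by (blast intro: order_trans)
qed

section \<open>Oriented paths\<close>

lemma steps_iff: "z' - z \<in> steps \<longleftrightarrow> z' = z + (1, 1) \<or> z' = z + (2, 0) \<or> z' = z + (1, -1)"
  by (cases z; cases z') (auto simp: steps_def)

lemma steps_fst: "z' - z \<in> steps \<Longrightarrow> fst z < fst z' \<and> fst z' \<le> fst z + 2"
  by (auto simp: steps_iff)

lemma steps_snd: "z' - z \<in> steps \<Longrightarrow> snd z' - snd z \<le> fst z' - fst z"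
  by (auto simp: steps_iff)

lemma reach_lattice: "reach \<omega> z z' \<Longrightarrow> z \<in> lattice \<and> z' \<in> lattice"
  by (induction rule: reach.induct) auto

lemma reach_slope: "reach \<omega> z z' \<Longrightarrow> fst z \<le> fst z' \<and> snd z' - snd z \<le> fst z' - fst z"
proof (induction rule: reach.induct)
  case (step z z' z'')
  then show ?case using steps_fst[OF step(3)] steps_snd[OF step(3)] by linarith
qed simp

lemma reach_cong_left:
  assumes "reach \<omega> z z'" and "\<And>w. w \<in> lattice \<Longrightarrow> fst w < fst z' \<Longrightarrow> \<omega> w = \<omega>' w"
  shows "reach \<omega>' z z'"
  using assms
proof (induction rule: reach.induct)
  case (refl z)
  then show ?case by (intro reach.refl)
next
  case (step z z' z'')
  have "fst z < fst z''" using steps_fst[OF step(3)] reach_slope[OF step(5)] by simp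
  then have "\<omega>' z" using step.prems[OF step(1)] step(2) by simp
  moreover have "reach \<omega>' z' z''" using step.IH step.prems by simp
  ultimately show ?case using step(1,3,4) by (blast intro: reach.step)
qed

text \<open>A path crossing column \<open>k\<close> either visits it or jumps over it by a \<open>(2, 0)\<close> step from
  \<open>(k - 1, s - 1)\<close>; in the latter case \<open>(k, s)\<close> is also reachable, and the path continues from
  \<open>(k + 1, s - 1)\<close>.\<close>
lemma reach_crosses_column:
  assumes "reach \<omega> z w" and "fst z \<le> k" and "k \<le> fst w"
  shows "\<exists>s. reach \<omega> z (k, s) \<and> (reach \<omega> (k, s) w \<or> reach \<omega> (k + 1, s - 1) w)"
  using assms
proof (induction rule: reach.induct)
  case (refl z)
  then show ?case by (cases z) (auto intro: reach.refl)
next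
  case (step z z' z'')
  obtain a b where z: "z = (a, b)" by (cases z)
  show ?case
  proof (cases "fst z' \<le> k")
    case True
    then obtain s where "reach \<omega> z' (k, s)" "reach \<omega> (k, s) z'' \<or> reach \<omega> (k + 1, s - 1) z''"
      using step.IH step.prems reach_slope[OF step(5)] by auto
    then show ?thesis using reach.step[where \<omega>=\<omega>, OF step(1-4)] by blast
  next
    case False
    show ?thesis
    proof (cases "a = k")
      case True
      then show ?thesis using z reach.refl[OF step(1)] reach.step[where \<omega>=\<omega>, OF step(1-5)] by auto
    next
      case False
      have "a < k" using False step.prems z by auto
      then have jump: "a = k - 1" "z' = (k + 1, b)"
        using step(3) \<open>\<not> fst z' \<le> k\<close> z by (auto simp: steps_iff)
      have lat: "(k, b + 1) \<in> lattice" using step(1) z jump by (auto simp: lattice_def)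
      have "(k, b + 1) - z \<in> steps" using z jump by (simp add: steps_def)
      then have "reach \<omega> z (k, b + 1)" using step(1,2) lat reach.refl[OF lat] by (blast intro: reach.step)
      then show ?thesis using step(5) jump by (intro exI[of _ "b + 1"]) auto
    qed
  qed
qed

definition shift_origin :: "nat \<Rightarrow> int \<Rightarrow> (site \<Rightarrow> bool) \<Rightarrow> (site \<Rightarrow> bool)" where
  "shift_origin n a \<omega> = restrict (\<lambda>w. \<omega> (w + (int n, a))) lattice"

lemma lattice_diff:
  assumes "z \<in> lattice" and "int n \<le> fst z" and "even (int n + a)"
  shows "z - (int n, a) \<in> lattice"
proof -
  obtain u v where z: "z = (u, v)" by (cases z)
  have "even ((u + v) - (int n + a))" using assms(1,3) z by (simp add: lattice_def)
  then have "even ((u - int n) + (v - a))" by (simp add: algebra_simps)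
  then show ?thesis using assms(2) z by (simp add: lattice_def)
qed

lemma reach_shift:
  assumes "reach \<omega> z z'" and "int n \<le> fst z" and "even (int n + a)"
  shows "reach (shift_origin n a \<omega>) (z - (int n, a)) (z' - (int n, a))"
  using assms
proof (induction rule: reach.induct)
  case (refl z)
  then show ?case by (intro reach.refl lattice_diff)
next
  case (step z z' z'')
  have "fst z < fst z'" using steps_fst[OF step(3)] by simp
  then have lat: "z - (int n, a) \<in> lattice" "z' - (int n, a) \<in> lattice"
    using step(1,4,7,8) by (auto intro!: lattice_diff)
  moreover have "shift_origin n a \<omega> (z - (int n, a))" using lat step(2) by (simp add: shift_origin_def)
  moreover have "(z' - (int n, a)) - (z - (int n, a)) \<in> steps" using step(3) by simp
  moreover have "reach (shift_origin n a \<omega>) (z' - (int n, a)) (z'' - (int n, a))"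
    using step.IH step(7,8) \<open>fst z < fst z'\<close> by simp
  ultimately show ?case by (metis reach.step)
qed

section \<open>The rightmost reached point\<close>

definition reached :: "nat \<Rightarrow> (site \<Rightarrow> bool) \<Rightarrow> int \<Rightarrow> bool" where
  "reached n \<omega> x \<longleftrightarrow> (\<exists>y\<le>0. reach \<omega> (0, y) (int n, x) \<or> reach \<omega> (1, y) (int n, x))"

lemma reached_le: "reached n \<omega> x \<Longrightarrow> x \<le> int n"
  unfolding reached_def using reach_slope by fastforce

lemma reached_parity: "reached n \<omega> x \<Longrightarrow> even (int n + x)"
  unfolding reached_def using reach_lattice by (fastforce simp: lattice_def)

lemma reached_cong:
  assumes "\<And>w. w \<in> lattice \<Longrightarrow> fst w < int n \<Longrightarrow> \<omega> w = \<omega>' w"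
  shows "reached n \<omega> x \<longleftrightarrow> reached n \<omega>' x"
  unfolding reached_def using reach_cong_left[of \<omega> _ "(int n, x)" \<omega>'] reach_cong_left[of \<omega>' _ "(int n, x)" \<omega>]
    assms by (metis fst_conv)

text \<open>Cutting a path at column \<open>n\<close> (\<open>reach_crosses_column\<close>) gives a point \<open>(n, s)\<close> reached from
  the axis; seen from any \<open>(n, a)\<close> with \<open>a \<ge> s\<close>, the rest of the path starts on the new axis.\<close>
lemma reached_add:
  assumes "1 \<le> n" and "reached (n + m) \<omega> x"
  shows "\<exists>s. reached n \<omega> s \<and>
    (\<forall>a. s \<le> a \<longrightarrow> even (int n + a) \<longrightarrow> reached m (shift_origin n a \<omega>) (x - a))"
proof -
  obtain y t where yt: "y \<le> 0" "t = 0 \<or> t = 1" "reach \<omega> (t, y) (int (n + m), x)"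
    using assms(2) unfolding reached_def by blast
  obtain s where s: "reach \<omega> (t, y) (int n, s)"
    "reach \<omega> (int n, s) (int (n + m), x) \<or> reach \<omega> (int n + 1, s - 1) (int (n + m), x)"
    using reach_crosses_column[OF yt(3), of "int n"] yt(2) assms(1) by auto
  have "reached n \<omega> s" using s(1) yt unfolding reached_def by blast
  moreover have "reached m (shift_origin n a \<omega>) (x - a)" if a: "s \<le> a" "even (int n + a)" for a
    using s(2)
  proof
    assume r: "reach \<omega> (int n, s) (int (n + m), x)"
    have "reach (shift_origin n a \<omega>) (0, s - a) (int m, x - a)"
      using reach_shift[OF r _ a(2)] by simp
    then show ?thesis unfolding reached_def using a(1) by (intro exI[of _ "s - a"]) auto
  next
    assume r: "reach \<omega> (int n + 1, s - 1) (int (n + m), x)"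
    have "reach (shift_origin n a \<omega>) (1, s - 1 - a) (int m, x - a)"
      using reach_shift[OF r _ a(2)] by simp
    then show ?thesis unfolding reached_def using a(1) by (intro exI[of _ "s - 1 - a"]) auto
  qed
  ultimately show ?thesis by blast
qed

lemma ubar_eq_Sup:
  "1 \<le> n \<Longrightarrow> ubar n \<omega> = Sup ((\<lambda>x. ereal (of_int x)) ` Collect (reached n \<omega>))"
  unfolding ubar_def reached_def by (auto intro!: arg_cong[where f = Sup])

lemma ubar_cong:
  assumes "\<And>w. w \<in> lattice \<Longrightarrow> fst w < int n \<Longrightarrow> \<omega> w = \<omega>' w"
  shows "ubar n \<omega> = ubar n \<omega>'"
proof (cases "n = 0")
  case False
  have "reached n \<omega> = reached n \<omega>'" using reached_cong[of n \<omega> \<omega>', OF assms] by blast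
  then show ?thesis using False by (simp add: ubar_eq_Sup)
qed (simp add: ubar_def)

lemma ubar_le: "ubar n \<omega> \<le> ereal (real n)"
proof (cases "n = 0")
  case False
  then show ?thesis by (subst ubar_eq_Sup) (auto intro!: Sup_least dest!: reached_le)
qed (simp add: ubar_def)

lemma ubar_attained:
  assumes "1 \<le> n" and "reached n \<omega> x\<^sub>0"
  obtains a where "reached n \<omega> a" and "ubar n \<omega> = ereal (of_int a)"
    and "\<And>x. reached n \<omega> x \<Longrightarrow> x \<le> a"
proof -
  let ?S = "{x. reached n \<omega> x \<and> x\<^sub>0 \<le> x}"
  have "finite ?S" by (rule finite_subset[of _ "{x\<^sub>0..int n}"]) (auto dest: reached_le)
  moreover have "x\<^sub>0 \<in> ?S" using assms(2) by simp
  ultimately have max: "Max ?S \<in> ?S" "\<And>x. x \<in> ?S \<Longrightarrow> x \<le> Max ?S"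
    by (metis Max_in empty_iff, simp)
  then have ge: "x \<le> Max ?S" if "reached n \<omega> x" for x
    using that by (cases "x\<^sub>0 \<le> x") auto
  moreover have "ubar n \<omega> = ereal (of_int (Max ?S))"
    unfolding ubar_eq_Sup[OF assms(1)] using max(1) ge by (intro Sup_eqI) auto
  ultimately show ?thesis using max(1) that by blast
qed

lemma ubar_eq_MInfty:
  assumes "1 \<le> n" and "\<nexists>x. reached n \<omega> x"
  shows "ubar n \<omega> = -\<infinity>"
proof -
  have "Collect (reached n \<omega>) = {}" using assms(2) by simp
  then show ?thesis unfolding ubar_eq_Sup[OF assms(1)] by (metis image_empty Sup_empty bot_ereal_def)
qed

lemma ubar_cases:
  assumes "1 \<le> n"
  obtains "ubar n \<omega> = -\<infinity>"
  | a where "ubar n \<omega> = ereal (of_int a)" and "even (int n + a)"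
  using ubar_attained[OF assms] ubar_eq_MInfty[OF assms] reached_parity by metis

lemma ubar_add_MInfty:
  assumes "1 \<le> n" and "ubar n \<omega> = -\<infinity>"
  shows "ubar (n + m) \<omega> = -\<infinity>"
proof -
  have "\<nexists>x. reached n \<omega> x" using ubar_attained[OF assms(1)] assms(2) by (metis MInfty_neq_ereal(2))
  then have "\<nexists>x. reached (n + m) \<omega> x" using reached_add[OF assms(1)] by blast
  then show ?thesis using assms(1) by (intro ubar_eq_MInfty) simp_all
qed

text \<open>Beyond the rightmost point \<open>(n, a)\<close> reached at column \<open>n\<close>, the configuration is explored
  afresh from the axis translated to \<open>(n, a)\<close>.\<close>
lemma ubar_add_le:
  assumes "1 \<le> n" and "1 \<le> m" and "ubar n \<omega> = ereal (of_int a)"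
  shows "ubar (n + m) \<omega> \<le> ereal (of_int a) + ubar m (shift_origin n a \<omega>)"
proof -
  have "\<exists>x. reached n \<omega> x" using ubar_eq_MInfty[OF assms(1), of \<omega>] assms(3) by auto
  then obtain a' where a': "reached n \<omega> a'" "ubar n \<omega> = ereal (of_int a')"
    "\<And>x. reached n \<omega> x \<Longrightarrow> x \<le> a'"
    using ubar_attained[OF assms(1)] by metis
  have "a' = a" using a'(2) assms(3) by simp
  have "ereal (of_int x) \<le> ereal (of_int a) + ubar m (shift_origin n a \<omega>)"
    if x: "reached (n + m) \<omega> x" for x
  proof -
    obtain s where "reached n \<omega> s"
      "\<And>b. s \<le> b \<Longrightarrow> even (int n + b) \<Longrightarrow> reached m (shift_origin n b \<omega>) (x - b)"
      using reached_add[OF assms(1) x] by blast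
    then have "reached m (shift_origin n a \<omega>) (x - a)"
      using a' \<open>a' = a\<close> reached_parity by blast
    then have "ereal (of_int (x - a)) \<le> ubar m (shift_origin n a \<omega>)"
      unfolding ubar_eq_Sup[OF assms(2)] by (intro Sup_upper image_eqI[where x = "x - a"]) simp_all
    then show ?thesis by (cases "ubar m (shift_origin n a \<omega>)") auto
  qed
  then show ?thesis using assms by (subst ubar_eq_Sup) (auto intro!: Sup_least)
qed

section \<open>Measurability and the product structure\<close>

fun reach_in :: "nat \<Rightarrow> (site \<Rightarrow> bool) \<Rightarrow> site \<Rightarrow> site \<Rightarrow> bool" where
  "reach_in 0 \<omega> z z' \<longleftrightarrow> z \<in> lattice \<and> z = z'"
| "reach_in (Suc k) \<omega> z z' \<longleftrightarrow> z \<in> lattice \<and> \<omega> z \<and>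
     (z + (1, 1) \<in> lattice \<and> reach_in k \<omega> (z + (1, 1)) z' \<or>
      z + (2, 0) \<in> lattice \<and> reach_in k \<omega> (z + (2, 0)) z' \<or>
      z + (1, -1) \<in> lattice \<and> reach_in k \<omega> (z + (1, -1)) z')"

lemma reach_iff_reach_in: "reach \<omega> z z' \<longleftrightarrow> (\<exists>k. reach_in k \<omega> z z')"
proof
  show "reach \<omega> z z' \<Longrightarrow> \<exists>k. reach_in k \<omega> z z'"
  proof (induction rule: reach.induct)
    case (refl z)
    then show ?case by (intro exI[of _ 0]) simp
  next
    case (step z z' z'')
    then obtain k where "reach_in k \<omega> z' z''" by blast
    then show ?case using step(1-4) unfolding steps_iff by (intro exI[of _ "Suc k"]) auto
  qed
  assume "\<exists>k. reach_in k \<omega> z z'"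
  then obtain k where "reach_in k \<omega> z z'" by blast
  then show "reach \<omega> z z'"
  proof (induction k arbitrary: z)
    case 0
    then show ?case by (auto intro: reach.refl)
  next
    case (Suc k)
    from Suc.prems obtain d where "z \<in> lattice" "\<omega> z" "d \<in> {(1, 1), (2, 0), (1, -1)}"
      "z + d \<in> lattice" "reach_in k \<omega> (z + d) z'"
      by auto
    then show ?case using Suc.IH reach.step[of z \<omega> "z + d" z'] by (auto simp: steps_def)
  qed
qed

lemma pred_component_count_space[measurable]:
  "Measurable.pred (PiM I (\<lambda>_. count_space UNIV)) (\<lambda>\<omega>. \<omega> z)"
proof (cases "z \<in> I")
  case False
  then have undef: "\<omega> z = undefined" if "\<omega> \<in> space (PiM I (\<lambda>_. count_space UNIV))" for \<omega>
    using that by (metis PiE_arb space_PiM)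
  show ?thesis by (subst measurable_cong[OF undef]) simp_all
qed (use measurable_component_singleton[of z I "\<lambda>_. count_space UNIV"] in simp)

lemma pred_reach_in[measurable]:
  "Measurable.pred (PiM I (\<lambda>_. count_space UNIV)) (\<lambda>\<omega>. reach_in k \<omega> z z')"
proof (induction k arbitrary: z)
  case (Suc k)
  note [measurable] = Suc
  show ?case unfolding reach_in.simps by measurable
qed (simp add: measurable_const)

lemma pred_reached[measurable]: "Measurable.pred (PiM I (\<lambda>_. count_space UNIV)) (\<lambda>\<omega>. reached n \<omega> x)"
  unfolding reached_def reach_iff_reach_in by measurable

lemma ubar_eq_SUP:
  "1 \<le> n \<Longrightarrow> ubar n \<omega> = (SUP x. if reached n \<omega> x then ereal (of_int x) else -\<infinity>)"
proof -
  assume n: "1 \<le> n"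
  have "Sup ((\<lambda>x. ereal (of_int x)) ` Collect (reached n \<omega>)) =
    (SUP x. if reached n \<omega> x then ereal (of_int x) else -\<infinity>)" (is "_ = ?rhs")
  proof (rule antisym)
    show "Sup ((\<lambda>x. ereal (of_int x)) ` Collect (reached n \<omega>)) \<le> ?rhs"
    proof (rule Sup_least)
      fix e assume "e \<in> (\<lambda>x. ereal (of_int x)) ` Collect (reached n \<omega>)"
      then obtain x where "reached n \<omega> x" "e = ereal (of_int x)" by blast
      then show "e \<le> ?rhs" by (intro SUP_upper2[of x]) auto
    qed
    show "?rhs \<le> Sup ((\<lambda>x. ereal (of_int x)) ` Collect (reached n \<omega>))"
      by (rule SUP_least) (auto intro: Sup_upper)
  qed
  then show ?thesis using ubar_eq_Sup[OF n] by simp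
qed

lemma measurable_ubar_count_space[measurable]:
  "ubar n \<in> borel_measurable (PiM I (\<lambda>_. count_space UNIV))"
proof (cases "n = 0")
  case False
  then have eq: "ubar n = (\<lambda>\<omega>. SUP x. if reached n \<omega> x then ereal (of_int x) else -\<infinity>)"
    using ubar_eq_SUP by fastforce
  show ?thesis unfolding eq by measurable
next
  case True
  then have "ubar n = (\<lambda>_. 0)" by (simp add: ubar_def fun_eq_iff)
  then show ?thesis by simp
qed

abbreviation bernoulli_field :: "real \<Rightarrow> site set \<Rightarrow> (site \<Rightarrow> bool) measure" where
  "bernoulli_field p I \<equiv> PiM I (\<lambda>_. measure_pmf (bernoulli_pmf p))"

lemma measurable_bernoulli_field_iff:
  "measurable (bernoulli_field p I) N = measurable (PiM I (\<lambda>_. count_space UNIV)) N"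
  by (intro measurable_cong_sets sets_PiM_cong) simp_all

lemma measurable_ubar[measurable]: "ubar n \<in> borel_measurable (bernoulli_field p I)"
  unfolding measurable_bernoulli_field_iff by measurable

lemma measurable_ubar_perc[measurable]: "ubar n \<in> borel_measurable (perc p)"
  unfolding perc_def by measurable

lemma measurable_component_bernoulli_field:
  "(\<lambda>\<omega>. \<omega> z) \<in> measurable (bernoulli_field p I) (measure_pmf (bernoulli_pmf p))"
proof -
  have "measurable (bernoulli_field p I) (measure_pmf (bernoulli_pmf p)) =
      measurable (PiM I (\<lambda>_. count_space UNIV)) (count_space UNIV)"
    by (intro measurable_cong_sets sets_PiM_cong) simp_all
  then show ?thesis by (simp only:) measurable
qed

lemma prob_space_bernoulli_field: "prob_space (bernoulli_field p I)"
  by (intro prob_space_PiM prob_space_measure_pmf)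

definition past :: "nat \<Rightarrow> site set" where
  "past n = {z \<in> lattice. fst z < int n}"

definition future :: "nat \<Rightarrow> site set" where
  "future n = {z \<in> lattice. int n \<le> fst z}"

lemma distr_past_future:
  "distr (perc p) (bernoulli_field p (past n) \<Otimes>\<^sub>M bernoulli_field p (future n))
      (\<lambda>\<omega>. (restrict \<omega> (past n), restrict \<omega> (future n))) =
    bernoulli_field p (past n) \<Otimes>\<^sub>M bernoulli_field p (future n)"
  unfolding perc_def by (rule distr_restrict_pair_PiM) (auto simp: past_def future_def prob_space_measure_pmf)

lemma distr_restrict_past: "distr (perc p) (bernoulli_field p (past n)) (\<lambda>\<omega>. restrict \<omega> (past n)) =
    bernoulli_field p (past n)"
  unfolding perc_def using distr_PiM_reindex[of lattice "\<lambda>_. measure_pmf (bernoulli_pmf p)" "\<lambda>i. i" "past n"]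
  by (auto simp: past_def prob_space_measure_pmf)

lemma measurable_shift_origin[measurable]:
  "shift_origin n a \<in> measurable (bernoulli_field p (future n)) (perc p)"
  unfolding shift_origin_def[abs_def] perc_def
  by (intro measurable_restrict measurable_component_bernoulli_field)

lemma distr_shift_origin:
  assumes "even (int n + a)"
  shows "distr (bernoulli_field p (future n)) (perc p) (shift_origin n a) = perc p"
proof -
  have "(\<lambda>w. w + (int n, a)) \<in> lattice \<rightarrow> future n"
    using assms by (auto simp: future_def lattice_def)
  moreover have "inj_on (\<lambda>w. w + (int n, a)) lattice" by (auto simp: inj_on_def)
  ultimately show ?thesis
    unfolding perc_def shift_origin_def[abs_def]
    using distr_PiM_reindex[of "future n" "\<lambda>_. measure_pmf (bernoulli_pmf p)" "\<lambda>w. w + (int n, a)" lattice]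
    by (auto simp: prob_space_measure_pmf)
qed

lemma ubar_restrict_past: "ubar n (restrict \<omega> (past n)) = ubar n \<omega>"
  by (rule ubar_cong) (simp add: past_def)

lemma shift_origin_restrict_future:
  "even (int n + a) \<Longrightarrow> shift_origin n a (restrict \<omega> (future n)) = shift_origin n a \<omega>"
  unfolding shift_origin_def by (auto simp: fun_eq_iff future_def lattice_def)

section \<open>Submultiplicativity of the exponential moment\<close>

definition ubar_mgf :: "real \<Rightarrow> real \<Rightarrow> nat \<Rightarrow> ennreal" where
  "ubar_mgf p l n = (\<integral>\<^sup>+ \<omega>. exp_ereal l (ubar n \<omega>) \<partial>perc p)"

lemma ubar_mgf_le_exp: "0 \<le> l \<Longrightarrow> ubar_mgf p l n \<le> ennreal (exp (l * real n))"
proof -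
  assume l: "0 \<le> l"
  interpret prob_space "perc p" unfolding perc_def by (rule prob_space_bernoulli_field)
  have "ubar_mgf p l n \<le> (\<integral>\<^sup>+ \<omega>. ennreal (exp (l * real n)) \<partial>perc p)"
    unfolding ubar_mgf_def using exp_ereal_mono[OF l ubar_le] by (intro nn_integral_mono) simp
  also have "\<dots> = ennreal (exp (l * real n))" by (simp add: emeasure_space_1)
  finally show ?thesis .
qed

text \<open>When \<open>ubar n u = -\<infinity>\<close> the first factor vanishes, so the junk value
  \<open>\<lfloor>real_of_ereal (-\<infinity>)\<rfloor> = 0\<close> used for the translation is harmless.\<close>
lemma exp_ereal_ubar_add_le:
  fixes \<omega> :: "site \<Rightarrow> bool"
  assumes "1 \<le> n" and "1 \<le> m" and "0 \<le> l"
  defines "u \<equiv> restrict \<omega> (past n)"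
  shows "exp_ereal l (ubar (n + m) \<omega>) \<le>
    exp_ereal l (ubar n u) *
    exp_ereal l (ubar m (shift_origin n \<lfloor>real_of_ereal (ubar n u)\<rfloor> (restrict \<omega> (future n))))"
proof (cases rule: ubar_cases[OF assms(1), of \<omega>])
  case 1
  then show ?thesis using ubar_add_MInfty[OF assms(1) 1] by (simp add: exp_ereal_def)
next
  case (2 a)
  have "exp_ereal l (ubar (n + m) \<omega>) \<le> exp_ereal l (ereal (of_int a) + ubar m (shift_origin n a \<omega>))"
    using ubar_add_le[OF assms(1,2) 2(1)] assms(3) by (rule exp_ereal_mono[rotated])
  also have "\<dots> = exp_ereal l (ubar n \<omega>) * exp_ereal l (ubar m (shift_origin n a \<omega>))"
    unfolding exp_ereal_add 2(1) ..
  finally show ?thesis using 2 by (simp add: u_def ubar_restrict_past shift_origin_restrict_future)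
qed

lemma nn_integral_exp_ereal_ubar_shift_origin:
  assumes "even (int n + a)"
  shows "(\<integral>\<^sup>+ v. exp_ereal l (ubar m (shift_origin n a v)) \<partial>bernoulli_field p (future n)) = ubar_mgf p l m"
proof -
  have "(\<integral>\<^sup>+ v. exp_ereal l (ubar m (shift_origin n a v)) \<partial>bernoulli_field p (future n)) =
      (\<integral>\<^sup>+ \<omega>. exp_ereal l (ubar m \<omega>) \<partial>distr (bernoulli_field p (future n)) (perc p) (shift_origin n a))"
    by (rule nn_integral_distr[symmetric]) measurable
  then show ?thesis by (simp add: distr_shift_origin[OF assms] ubar_mgf_def)
qed

lemma ubar_mgf_add_le:
  assumes "1 \<le> n" and "1 \<le> m" and "0 \<le> l"
  shows "ubar_mgf p l (n + m) \<le> ubar_mgf p l n * ubar_mgf p l m"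
proof -
  define S where "S = bernoulli_field p (past n)"
  define T where "T = bernoulli_field p (future n)"
  define G where "G x = exp_ereal l (ubar n (fst x)) *
    exp_ereal l (ubar m (shift_origin n \<lfloor>real_of_ereal (ubar n (fst x))\<rfloor> (snd x)))" for x
  interpret S: prob_space S unfolding S_def by (rule prob_space_bernoulli_field)
  interpret T: prob_space T unfolding T_def by (rule prob_space_bernoulli_field)
  interpret ST: pair_sigma_finite S T ..
  have G_measurable[measurable]: "G \<in> borel_measurable (S \<Otimes>\<^sub>M T)"
    unfolding G_def[abs_def] S_def T_def by measurable
  have split: "(\<lambda>\<omega>. (restrict \<omega> (past n), restrict \<omega> (future n))) \<in> measurable (perc p) (S \<Otimes>\<^sub>M T)"
    unfolding S_def T_def perc_def by (intro measurable_Pair measurable_restrict measurable_component_bernoulli_field)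
  have inner: "(\<integral>\<^sup>+ v. G (u, v) \<partial>T) = exp_ereal l (ubar n u) * ubar_mgf p l m" for u
  proof (cases rule: ubar_cases[OF assms(1), of u])
    case 1
    then show ?thesis by (simp add: G_def exp_ereal_def)
  next
    case (2 a)
    then show ?thesis unfolding G_def T_def
      by (simp add: nn_integral_cmult nn_integral_exp_ereal_ubar_shift_origin)
  qed
  have "ubar_mgf p l (n + m) \<le> (\<integral>\<^sup>+ \<omega>. G (restrict \<omega> (past n), restrict \<omega> (future n)) \<partial>perc p)"
    unfolding ubar_mgf_def G_def using exp_ereal_ubar_add_le[OF assms] by (intro nn_integral_mono) simp
  also have "\<dots> = (\<integral>\<^sup>+ x. G x \<partial>(S \<Otimes>\<^sub>M T))"
  proof -
    have "distr (perc p) (S \<Otimes>\<^sub>M T) (\<lambda>\<omega>. (restrict \<omega> (past n), restrict \<omega> (future n))) = S \<Otimes>\<^sub>M T"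
      unfolding S_def T_def by (rule distr_past_future)
    then show ?thesis using nn_integral_distr[OF split, of G] G_measurable by simp
  qed
  also have "\<dots> = (\<integral>\<^sup>+ u. (\<integral>\<^sup>+ v. G (u, v) \<partial>T) \<partial>S)"
    by (rule T.nn_integral_fst[OF G_measurable, symmetric])
  also have "\<dots> = (\<integral>\<^sup>+ u. exp_ereal l (ubar n u) \<partial>S) * ubar_mgf p l m"
    unfolding inner S_def by (rule nn_integral_multc) measurable
  also have "(\<integral>\<^sup>+ u. exp_ereal l (ubar n u) \<partial>S) = ubar_mgf p l n"
    using nn_integral_distr[of "\<lambda>\<omega>. restrict \<omega> (past n)" "perc p" S "\<lambda>u. exp_ereal l (ubar n u)"]
    unfolding S_def ubar_mgf_def distr_restrict_past
    by (simp add: ubar_restrict_past perc_def measurable_restrict measurable_component_bernoulli_field)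
  finally show ?thesis .
qed

lemma ubar_mgf_mult_add_le:
  assumes "1 \<le> k" and "0 \<le> l"
  shows "ubar_mgf p l (j * k + r) \<le> ubar_mgf p l k ^ j * ennreal (exp (l * real r))"
proof (induction j)
  case 0
  then show ?case using ubar_mgf_le_exp[OF assms(2)] by simp
next
  case (Suc j)
  show ?case
  proof (cases "j * k + r = 0")
    case True
    then show ?thesis using assms(1) by simp
  next
    case False
    then have "1 \<le> j * k + r" by linarith
    have "ubar_mgf p l (Suc j * k + r) = ubar_mgf p l (k + (j * k + r))" by (simp add: algebra_simps)
    also have "\<dots> \<le> ubar_mgf p l k * ubar_mgf p l (j * k + r)"
      using \<open>1 \<le> j * k + r\<close> assms by (intro ubar_mgf_add_le)
    also have "\<dots> \<le> ubar_mgf p l k * (ubar_mgf p l k ^ j * ennreal (exp (l * real r)))"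
      by (intro mult_left_mono Suc.IH) simp
    finally show ?thesis by (simp add: algebra_simps)
  qed
qed

lemma ubar_mgf_le_exp_linear:
  assumes "1 \<le> k" and "0 \<le> l" and "ubar_mgf p l k \<le> ennreal (exp (l * c))"
  shows "ubar_mgf p l n \<le> ennreal (exp (l * (c * real (n div k) + real (n mod k))))"
proof -
  have "ubar_mgf p l n = ubar_mgf p l (n div k * k + n mod k)" by simp
  also have "\<dots> \<le> ubar_mgf p l k ^ (n div k) * ennreal (exp (l * real (n mod k)))"
    using assms(1,2) by (rule ubar_mgf_mult_add_le)
  also have "\<dots> \<le> ennreal (exp (l * c)) ^ (n div k) * ennreal (exp (l * real (n mod k)))"
    by (intro mult_right_mono power_mono assms(3)) simp_all
  also have "\<dots> = ennreal (exp (l * (c * real (n div k) + real (n mod k))))"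
    by (simp add: ennreal_power ennreal_mult[symmetric] exp_of_nat_mult[symmetric] exp_add[symmetric]
        algebra_simps)
  finally show ?thesis .
qed

section \<open>The tail bound\<close>

lemma div_mod_linear_bound:
  fixes n k :: nat
  assumes "0 < k" and "0 \<le> \<delta>"
  shows "(\<alpha> * real k - \<delta>) * real (n div k) + real (n mod k) - \<alpha> * real n
    \<le> \<delta> + real k * \<bar>1 - \<alpha>\<bar> - \<delta> / real k * real n"
proof -
  define j r where "j = n div k" and "r = n mod k"
  have n: "real n = real j * real k + real r" unfolding j_def r_def
    by (metis div_mult_mod_eq of_nat_add of_nat_mult)
  have "r < k" unfolding r_def using assms(1) by simp
  have "real r * (1 - \<alpha>) \<le> real k * \<bar>1 - \<alpha>\<bar>"
    using \<open>r < k\<close> by (intro order_trans[OF mult_left_mono mult_right_mono]) auto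
  moreover have "\<delta> * real r / real k \<le> \<delta>"
    using \<open>r < k\<close> assms by (simp add: divide_le_eq mult_left_mono)
  moreover have "\<delta> / real k * real n = \<delta> * real j + \<delta> * real r / real k"
    unfolding n using assms(1) by (simp add: field_simps)
  moreover have "(\<alpha> * real k - \<delta>) * real j + real r - \<alpha> * real n = real r * (1 - \<alpha>) - \<delta> * real j"
    unfolding n by (simp add: algebra_simps)
  ultimately show ?thesis unfolding j_def[symmetric] r_def[symmetric] by linarith
qed

lemma ubar_tail_le:
  assumes "1 \<le> k" and "0 < l" and "0 \<le> \<delta>"
    and mgf: "ubar_mgf p l k \<le> ennreal (exp (l * (\<alpha>' * real k - \<delta>)))"
  shows "measure (perc p) {\<omega> \<in> space (perc p). ubar n \<omega> > ereal (\<alpha>' * real n)}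
    \<le> exp (l * (\<delta> + real k * \<bar>1 - \<alpha>'\<bar>)) * exp (- (l * \<delta> / real k) * real n)"
proof -
  interpret prob_space "perc p" unfolding perc_def by (rule prob_space_bernoulli_field)
  define A where "A = {\<omega> \<in> space (perc p). ubar n \<omega> > ereal (\<alpha>' * real n)}"
  define e where "e = (\<alpha>' * real k - \<delta>) * real (n div k) + real (n mod k)"
  have "ennreal (exp (l * (\<alpha>' * real n)) * measure (perc p) A) \<le> ubar_mgf p l n"
    using exp_ereal_chernoff[of "ubar n" l "\<alpha>' * real n"] \<open>0 < l\<close>
    by (simp add: A_def ubar_mgf_def emeasure_eq_measure ennreal_mult)
  also have "\<dots> \<le> ennreal (exp (l * e))"
    unfolding e_def using assms(1,2) mgf by (intro ubar_mgf_le_exp_linear) simp_all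
  finally have "measure (perc p) A \<le> exp (l * e) / exp (l * (\<alpha>' * real n))"
    by (simp add: ennreal_le_iff pos_le_divide_eq mult.commute)
  also have "\<dots> = exp (l * (e - \<alpha>' * real n))" by (simp add: exp_diff[symmetric] algebra_simps)
  also have "\<dots> \<le> exp (l * (\<delta> + real k * \<bar>1 - \<alpha>'\<bar> - \<delta> / real k * real n))"
    unfolding e_def using div_mod_linear_bound[of k \<delta> \<alpha>' n] assms by simp
  also have "\<dots> = exp (l * (\<delta> + real k * \<bar>1 - \<alpha>'\<bar>)) * exp (- (l * \<delta> / real k) * real n)"
    by (simp add: exp_add[symmetric] algebra_simps)
  finally show ?thesis unfolding A_def .
qed

lemma expect_ubar_less_of_alpha_less:
  assumes "alpha p < ereal \<alpha>'"
  obtains k where "1 \<le> k" and "expect_ereal (perc p) (ubar k) < ereal (\<alpha>' * real k)"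
proof -
  obtain k :: nat where k: "1 \<le> k" "expect_ereal (perc p) (ubar k) / ereal (real k) < ereal \<alpha>'"
    using assms unfolding alpha_def INF_less_iff by auto
  then have "expect_ereal (perc p) (ubar k) < ereal (\<alpha>' * real k)"
    by (cases "expect_ereal (perc p) (ubar k)") (auto simp: divide_less_eq split: if_splits)
  then show ?thesis using k(1) that by blast
qed

text \<open>\<open>bernoulli_pmf\<close> clamps its parameter to \<open>[0, 1]\<close>.\<close>
theorem lemma2p5:
  fixes p \<alpha>' :: real
  assumes "0 \<le> p" and "p \<le> 1" and "alpha p < ereal \<alpha>'"
  shows "\<exists>C \<gamma>::real. \<gamma> > 0 \<and> (\<forall>n::nat.
           {\<omega> \<in> space (perc p). ubar n \<omega> > ereal (\<alpha>' * real n)} \<in> sets (perc p) \<and>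
           measure (perc p) {\<omega> \<in> space (perc p). ubar n \<omega> > ereal (\<alpha>' * real n)}
             \<le> C * exp (- \<gamma> * real n))"
proof -
  interpret prob_space "perc p" unfolding perc_def by (rule prob_space_bernoulli_field)
  obtain k where k: "1 \<le> k" "expect_ereal (perc p) (ubar k) < ereal (\<alpha>' * real k)"
    using expect_ubar_less_of_alpha_less[OF assms(3)] by blast
  obtain c where c: "expect_ereal (perc p) (ubar k) < ereal c" "c < \<alpha>' * real k"
    using ereal_dense2[OF k(2)] by auto
  obtain l where l: "0 < l" "ubar_mgf p l k \<le> ennreal (exp (l * c))"
    using exp_ereal_moment_le_exp[OF measurable_ubar_perc ubar_le c(1)] unfolding ubar_mgf_def by blast
  define \<delta> where "\<delta> = \<alpha>' * real k - c"
  have "0 < \<delta>" and mgf: "ubar_mgf p l k \<le> ennreal (exp (l * (\<alpha>' * real k - \<delta>)))"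
    using c(2) l(2) by (simp_all add: \<delta>_def)
  then have "0 < l * \<delta> / real k" using l(1) k(1) by simp
  moreover have "{\<omega> \<in> space (perc p). ubar n \<omega> > ereal (\<alpha>' * real n)} \<in> sets (perc p)" for n
    by measurable
  ultimately show ?thesis
    using ubar_tail_le[OF k(1) l(1) less_imp_le[OF \<open>0 < \<delta>\<close>] mgf] by blast
qed

end
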